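(* Let $\Theta\subseteq\mathbb{R}^p$ be open and $\rho_\theta=\sum_{k=1}^dp_k(\theta)|w_k(\theta)\rangle\langle w_k(\theta)|$ a family of density matrices on $\mathbb{C}^d$, with $p_k\ge0$ differentiable and $\{|w_k(\theta)\rangle\}$ an orthonormal basis of $\mathbb{C}^d$ depending differentiably on $\theta$. Then, for every $\theta\in\Theta$, $H_\theta\le C_L(\theta)\le C_\Upsilon(\theta)$ in positive semidefinite order. Equality $H_\theta=C_L(\theta)$ holds if and only if $\langle\frac{\partial w_j}{\partial\theta^m}|w_k\rangle=0$ for all $m$ and all $j\neq k$ with $p_j,p_k>0$. Equality $C_L(\theta)=C_\Upsilon(\theta)$ holds if and only if $\langle\frac{\partial w_i}{\partial\theta^m}|w_i\rangle=0$ for all $m$ and all $i$ with $p_i>0$.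
   Context: Write $|w_i^{(m)}\rangle=\partial|w_i\rangle/\partial\theta^m$. $H_\theta$ is the SLD quantum information matrix with entries $(H_\theta)_{kl}=\mathrm{Re}\,\mathrm{tr}\{\lambda^k\rho_\theta\lambda^l\}$, where $\lambda^k$ is a Hermitian solution of $\frac{\partial\rho_\theta}{\partial\theta^k}=\frac12(\rho_\theta\lambda^k+\lambda^k\rho_\theta)$. The $C_L$ quantum information is the $p\times p$ matrix $(C_L)_{kl}=\sum_{i:p_i>0}\frac{1}{p_i}\frac{\partial p_i}{\partial\theta^k}\frac{\partial p_i}{\partial\theta^l}+4\,\mathrm{Re}\sum_{i<j}(p_i+p_j)\langle w_i^{(k)}|w_j\rangle\langle w_j|w_i^{(l)}\rangle$. The Sarovar–Milburn quantum information of the family (relative to the chosen eigenvectors) is $(C_\Upsilon)_{kl}=(C_L)_{kl}+4\sum_{i:p_i>0}p_i\langle w_i^{(k)}|w_i\rangle\langle w_i|w_i^{(l)}\rangle$. *)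

theory Defs
  imports "HOL-Analysis.Analysis"
begin

definition braket :: "complex^'d \<Rightarrow> complex^'d \<Rightarrow> complex" where
  "braket a b = (\<Sum>i\<in>UNIV. cnj (a$i) * b$i)"

definition outer :: "complex^'d \<Rightarrow> complex^'d \<Rightarrow> complex^'d^'d" where
  "outer a b = (\<chi> i j. a$i * cnj (b$j))"

definition adj :: "complex^'d^'d \<Rightarrow> complex^'d^'d" where
  "adj A = (\<chi> i j. cnj (A$j$i))"

definition hermitian :: "complex^'d^'d \<Rightarrow> bool" where
  "hermitian A \<longleftrightarrow> adj A = A"

definition mtrace :: "complex^'d^'d \<Rightarrow> complex" where
  "mtrace A = (\<Sum>i\<in>UNIV. A$i$i)"

definition pd :: "(real^'p \<Rightarrow> 'b::real_normed_vector) \<Rightarrow> real^'p \<Rightarrow> 'p \<Rightarrow> 'b" where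
  "pd f \<theta> m = frechet_derivative f (at \<theta>) (axis m 1)"

definition rho :: "('d \<Rightarrow> real^'p \<Rightarrow> real) \<Rightarrow> ('d \<Rightarrow> real^'p \<Rightarrow> complex^'d) \<Rightarrow> real^'p \<Rightarrow> complex^'d^'d" where
  "rho p w \<theta> = (\<Sum>k\<in>UNIV. p k \<theta> *\<^sub>R outer (w k \<theta>) (w k \<theta>))"

definition SLD :: "('d \<Rightarrow> real^'p \<Rightarrow> real) \<Rightarrow> ('d \<Rightarrow> real^'p \<Rightarrow> complex^'d) \<Rightarrow> real^'p \<Rightarrow> 'p \<Rightarrow> complex^'d^'d" where
  "SLD p w \<theta> m = (SOME L. hermitian L \<and>
      pd (rho p w) \<theta> m = (1/2::real) *\<^sub>R (rho p w \<theta> ** L + L ** rho p w \<theta>))"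

definition H_info :: "('d \<Rightarrow> real^'p \<Rightarrow> real) \<Rightarrow> ('d \<Rightarrow> real^'p \<Rightarrow> complex^'d) \<Rightarrow> real^'p \<Rightarrow> real^'p^'p" where
  "H_info p w \<theta> = (\<chi> k l. Re (mtrace (SLD p w \<theta> k ** rho p w \<theta> ** SLD p w \<theta> l)))"

definition CL_info :: "('d::{finite,linorder} \<Rightarrow> real^'p \<Rightarrow> real) \<Rightarrow> ('d::{finite,linorder} \<Rightarrow> real^'p \<Rightarrow> complex^'d::{finite,linorder}) \<Rightarrow> real^'p \<Rightarrow> real^'p^'p" where
  "CL_info p w \<theta> = (\<chi> k l.
     (\<Sum>i\<in>{i. p i \<theta> > 0}. (1 / p i \<theta>) * pd (p i) \<theta> k * pd (p i) \<theta> l)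
     + 4 * Re (\<Sum>(i,j)\<in>{(i,j). i < j}. of_real (p i \<theta> + p j \<theta>) *
          braket (pd (w i) \<theta> k) (w j \<theta>) * braket (w j \<theta>) (pd (w i) \<theta> l)))"

text \<open>The extra term of the Sarovar-Milburn information is real; we take its real part.\<close>
definition CU_info :: "('d::{finite,linorder} \<Rightarrow> real^'p \<Rightarrow> real) \<Rightarrow> ('d::{finite,linorder} \<Rightarrow> real^'p \<Rightarrow> complex^'d::{finite,linorder}) \<Rightarrow> real^'p \<Rightarrow> real^'p^'p" where
  "CU_info p w \<theta> = (\<chi> k l. CL_info p w \<theta> $ k $ l
     + 4 * Re (\<Sum>i\<in>{i. p i \<theta> > 0}. of_real (p i \<theta>) *
          braket (pd (w i) \<theta> k) (w i \<theta>) * braket (w i \<theta>) (pd (w i) \<theta> l)))"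

definition psd_le :: "real^'p^'p \<Rightarrow> real^'p^'p \<Rightarrow> bool" where
  "psd_le A B \<longleftrightarrow> (\<forall>x. x \<bullet> ((B - A) *v x) \<ge> 0)"

end

theory Submission
  imports Defs
begin

(*
  Work in the eigenbasis w_i of rho, where rho = diag(p_i). Differentiating orthonormality shows that
  beta^m_ij = <w_i|d_m w_j> is skew-Hermitian, so d_m rho has entries
  delta_ij d_m p_i + (p_j - p_i) beta^m_ij, and the SLD equation determines lambda^m_ij = 2 (d_m rho)_ij /
  (p_i + p_j) wherever p_i + p_j > 0 (where p_i = p_j = 0, d_m rho_ij vanishes too, since a nonnegative
  p_i is critical at its zeros). Then H = F + sum_{i<>j} 4 p_j ((p_j - p_i)/(p_i + p_j))^2 Re(beta^k_ij
  conj beta^l_ij) with F the classical Fisher matrix, while C_L has the same shape with coefficient 4 p_j.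
  So C_L - H is a Gram matrix of the vectors beta_ij with weights 16 p_i p_j^2 / (p_i + p_j)^2, and
  C_Upsilon - C_L one of the beta_ii with weights 4 p_i. A Gram matrix with nonnegative weights is
  positive semidefinite and vanishes iff every vector carrying a positive weight vanishes.
*)

lemma bounded_bilinear_braket: "bounded_bilinear (braket :: complex^'d \<Rightarrow> complex^'d \<Rightarrow> complex)"
  unfolding bilinear_conv_bounded_bilinear[symmetric] bilinear_def
  by (auto intro!: linearI simp: braket_def sum.distrib sum_distrib_left algebra_simps;
      simp add: scaleR_conv_of_real sum_distrib_left algebra_simps)

lemma bounded_bilinear_outer: "bounded_bilinear (outer :: complex^'d \<Rightarrow> complex^'d \<Rightarrow> complex^'d^'d)"
  unfolding bilinear_conv_bounded_bilinear[symmetric] bilinear_def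
  by (auto intro!: linearI simp: outer_def vec_eq_iff algebra_simps;
      simp add: scaleR_conv_of_real algebra_simps)

lemma cnj_braket: "cnj (braket a b) = braket b a"
  by (simp add: braket_def mult.commute)

lemma braket_outer_mult: "braket x (outer a b *v y) = braket x a * braket b y"
  by (simp add: braket_def outer_def matrix_vector_mult_def sum_distrib_left sum_distrib_right
      algebra_simps) (rule sum.swap)

lemma linear_braket_matrix_vector_mult: "linear (\<lambda>A::complex^'d^'d. braket x (A *v y))"
  by (auto intro!: linearI simp: braket_def matrix_vector_mult_def sum.distrib sum_distrib_left
      algebra_simps; simp add: scaleR_conv_of_real sum_distrib_left algebra_simps)

lemma braket_pd_skew_if_constant:
  fixes u v :: "real^'p \<Rightarrow> complex^'d"
  assumes "open T" "t \<in> T" "u differentiable (at t)" "v differentiable (at t)"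
    and "\<And>s. s \<in> T \<Longrightarrow> braket (u s) (v s) = c"
  shows "braket (pd u t m) (v t) = - braket (u t) (pd v t m)"
proof -
  let ?u' = "frechet_derivative u (at t)" and ?v' = "frechet_derivative v (at t)"
  have "((\<lambda>s. braket (u s) (v s)) has_derivative (\<lambda>h. braket (u t) (?v' h) + braket (?u' h) (v t))) (at t)"
    using bounded_bilinear.FDERIV[OF bounded_bilinear_braket]
      assms(3,4) frechet_derivative_works by blast
  moreover have "((\<lambda>s. braket (u s) (v s)) has_derivative (\<lambda>h. 0)) (at t)"
    by (rule has_derivative_transform_within_open[OF has_derivative_const[of c] assms(1,2)])
      (use assms(5) in auto)
  ultimately have "(\<lambda>h. braket (u t) (?v' h) + braket (?u' h) (v t)) = (\<lambda>h. 0)"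
    by (rule has_derivative_unique)
  from fun_cong[OF this, of "axis m 1"] show ?thesis
    unfolding pd_def by (simp add: eq_neg_iff_add_eq_0 add.commute)
qed

lemma pd_eq_0_at_zero_of_nonneg:
  fixes f :: "real^'p \<Rightarrow> real"
  assumes "open T" "t \<in> T" "\<And>s. s \<in> T \<Longrightarrow> f s \<ge> 0" "f t = 0" "f differentiable (at t)"
  shows "pd f t m = 0"
proof -
  have "eventually (\<lambda>s. s \<in> T) (at t)"
    using assms(1,2) eventually_at_topological by blast
  then have "eventually (\<lambda>s. f t \<le> f s) (at t)"
    by (rule eventually_mono) (use assms(3,4) in auto)
  with assms(5) show ?thesis
    unfolding pd_def using frechet_derivative_works has_derivative_local_min by fastforce
qed

lemma pd_rho:
  assumes "\<And>k. p k differentiable (at t)" "\<And>k. w k differentiable (at t)"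
  shows "pd (rho p w) t m = (\<Sum>k\<in>UNIV. pd (p k) t m *\<^sub>R outer (w k t) (w k t)
      + p k t *\<^sub>R (outer (w k t) (pd (w k) t m) + outer (pd (w k) t m) (w k t)))"
proof -
  let ?p' = "\<lambda>k. frechet_derivative (p k) (at t)" and ?w' = "\<lambda>k. frechet_derivative (w k) (at t)"
  have outer_deriv: "((\<lambda>s. outer (w k s) (w k s)) has_derivative
     (\<lambda>h. outer (w k t) (?w' k h) + outer (?w' k h) (w k t))) (at t)" for k
    using bounded_bilinear.FDERIV[OF bounded_bilinear_outer]
      assms(2) frechet_derivative_works by blast
  have "(rho p w has_derivative (\<lambda>h. \<Sum>k\<in>UNIV. ?p' k h *\<^sub>R outer (w k t) (w k t)
      + p k t *\<^sub>R (outer (w k t) (?w' k h) + outer (?w' k h) (w k t)))) (at t)"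
    unfolding rho_def[abs_def]
    using has_derivative_scaleR[OF assms(1)[unfolded frechet_derivative_works] outer_deriv]
    by (intro has_derivative_sum) (simp add: add.commute)
  then show ?thesis
    unfolding pd_def by (simp add: frechet_derivative_at[symmetric])
qed

definition orthonormal_family :: "('d \<Rightarrow> complex^'d) \<Rightarrow> bool" where
  "orthonormal_family v \<longleftrightarrow> (\<forall>i j. braket (v i) (v j) = (if i = j then 1 else 0))"

definition basis_matrix :: "('d \<Rightarrow> complex^'d) \<Rightarrow> complex^'d^'d" where
  "basis_matrix v = (\<chi> a k. v k $ a)"

definition in_basis :: "('d \<Rightarrow> complex^'d) \<Rightarrow> complex^'d^'d \<Rightarrow> complex^'d^'d" where
  "in_basis v A = adj (basis_matrix v) ** A ** basis_matrix v"

lemma adj_adj [simp]: "adj (adj A) = A"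
  by (simp add: adj_def vec_eq_iff)

lemma adj_matrix_mult: "adj (A ** B) = adj B ** adj A"
  by (simp add: adj_def vec_eq_iff matrix_matrix_mult_def mult.commute)

lemma hermitian_conjugate: "hermitian X \<Longrightarrow> hermitian (U ** X ** adj U)"
  by (simp add: hermitian_def adj_matrix_mult matrix_mul_assoc)

lemma in_basis_entry: "in_basis v A $ i $ j = braket (v i) (A *v v j)"
  by (simp add: in_basis_def adj_def basis_matrix_def matrix_matrix_mult_def
      matrix_vector_mult_def braket_def sum_distrib_left sum_distrib_right mult.assoc)
    (rule sum.swap)

context
  fixes v :: "'d::finite \<Rightarrow> complex^'d"
  assumes orthonormal: "orthonormal_family v"
begin

lemma adj_basis_matrix_mult: "adj (basis_matrix v) ** basis_matrix v = mat 1"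
  using orthonormal by (simp add: orthonormal_family_def adj_def basis_matrix_def vec_eq_iff
      matrix_matrix_mult_def mat_def braket_def)

lemma basis_matrix_mult_adj: "basis_matrix v ** adj (basis_matrix v) = mat 1"
  using adj_basis_matrix_mult matrix_left_right_inverse by blast

lemma in_basis_mult: "in_basis v (A ** B) = in_basis v A ** in_basis v B"
proof -
  have "in_basis v A ** in_basis v B
      = adj (basis_matrix v) ** A ** (basis_matrix v ** adj (basis_matrix v)) ** B ** basis_matrix v"
    by (simp only: in_basis_def matrix_mul_assoc)
  then show ?thesis
    by (simp add: in_basis_def basis_matrix_mult_adj matrix_mul_assoc)
qed

lemma from_basis_in_basis: "basis_matrix v ** in_basis v A ** adj (basis_matrix v) = A"
proof -
  have "basis_matrix v ** in_basis v A ** adj (basis_matrix v)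
      = (basis_matrix v ** adj (basis_matrix v)) ** A ** (basis_matrix v ** adj (basis_matrix v))"
    by (simp only: in_basis_def matrix_mul_assoc)
  then show ?thesis
    by (simp add: basis_matrix_mult_adj)
qed

lemma in_basis_from_basis: "in_basis v (basis_matrix v ** X ** adj (basis_matrix v)) = X"
proof -
  have "in_basis v (basis_matrix v ** X ** adj (basis_matrix v))
      = (adj (basis_matrix v) ** basis_matrix v) ** X ** (adj (basis_matrix v) ** basis_matrix v)"
    by (simp only: in_basis_def matrix_mul_assoc)
  then show ?thesis
    by (simp add: adj_basis_matrix_mult)
qed

lemma in_basis_inject: "in_basis v A = in_basis v B \<longleftrightarrow> A = B"
  by (metis from_basis_in_basis)

lemma mtrace_in_basis: "mtrace (in_basis v A) = mtrace A"
proof -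
  have "trace (in_basis v A) = trace (basis_matrix v ** (adj (basis_matrix v) ** A))"
    unfolding in_basis_def using trace_mul_sym by blast
  also have "\<dots> = trace A"
    by (simp add: matrix_mul_assoc basis_matrix_mult_adj)
  finally show ?thesis
    by (simp add: mtrace_def trace_def)
qed

end

definition weighted_gram :: "'t set \<Rightarrow> ('t \<Rightarrow> real) \<Rightarrow> ('p \<Rightarrow> 't \<Rightarrow> complex) \<Rightarrow> real^'p^'p" where
  "weighted_gram T c g = (\<chi> k l. \<Sum>t\<in>T. c t * Re (g k t * cnj (g l t)))"

lemma quadratic_form_weighted_gram:
  fixes x :: "real^'p::finite"
  shows "x \<bullet> (weighted_gram T c g *v x) = (\<Sum>t\<in>T. c t * (cmod (\<Sum>k\<in>UNIV. of_real (x$k) * g k t))\<^sup>2)"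
proof -
  have norm_sum: "(cmod (\<Sum>k\<in>UNIV. of_real (x$k) * g k t))\<^sup>2
      = (\<Sum>k\<in>UNIV. \<Sum>l\<in>UNIV. x$k * x$l * Re (g k t * cnj (g l t)))" for t
  proof -
    have "(cmod (\<Sum>k\<in>UNIV. of_real (x$k) * g k t))\<^sup>2
        = Re ((\<Sum>k\<in>UNIV. of_real (x$k) * g k t) * cnj (\<Sum>k\<in>UNIV. of_real (x$k) * g k t))"
      by (simp add: cmod_def power2_eq_square sum_negf)
    then show ?thesis
      by (simp add: sum_distrib_left sum_distrib_right) (simp add: algebra_simps)
  qed
  have "x \<bullet> (weighted_gram T c g *v x)
      = (\<Sum>k\<in>UNIV. \<Sum>l\<in>UNIV. \<Sum>t\<in>T. c t * (x$k * x$l * Re (g k t * cnj (g l t))))"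
    by (simp add: weighted_gram_def inner_vec_def matrix_vector_mult_def sum_distrib_left
        sum_distrib_right) (simp add: mult_ac)
  also have "\<dots> = (\<Sum>t\<in>T. \<Sum>k\<in>UNIV. \<Sum>l\<in>UNIV. c t * (x$k * x$l * Re (g k t * cnj (g l t))))"
    by (subst sum.swap, subst (2) sum.swap) simp
  also have "\<dots> = (\<Sum>t\<in>T. c t * (cmod (\<Sum>k\<in>UNIV. of_real (x$k) * g k t))\<^sup>2)"
    by (intro sum.cong refl) (simp only: norm_sum sum_distrib_left)
  finally show ?thesis .
qed

lemma weighted_gram_eq_0_iff:
  assumes "finite T" "\<And>t. t \<in> T \<Longrightarrow> c t \<ge> 0"
  shows "weighted_gram T c g = 0 \<longleftrightarrow> (\<forall>m. \<forall>t\<in>T. c t > 0 \<longrightarrow> g m t = 0)"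
proof
  assume gram_0: "weighted_gram T c g = 0"
  have Re_mult_cnj: "Re (z * cnj z) = (cmod z)\<^sup>2" for z
    by (simp add: cmod_def power2_eq_square)
  have "(\<Sum>t\<in>T. c t * (cmod (g m t))\<^sup>2) = 0" for m
    using arg_cong[OF gram_0, of "\<lambda>A. A $ m $ m"]
    by (simp only: weighted_gram_def vec_lambda_beta Re_mult_cnj) simp
  then have "c t * (cmod (g m t))\<^sup>2 = 0" if "t \<in> T" for m t
    using sum_nonneg_eq_0_iff[OF assms(1), of "\<lambda>t. c t * (cmod (g m t))\<^sup>2"] assms(2) that
    by simp
  then show "\<forall>m. \<forall>t\<in>T. c t > 0 \<longrightarrow> g m t = 0"
    by fastforce
next
  assume "\<forall>m. \<forall>t\<in>T. c t > 0 \<longrightarrow> g m t = 0"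
  then have "c t * Re (g k t * cnj (g l t)) = 0" if "t \<in> T" for k l t
    using assms(2)[OF that] that by (cases "c t > 0") simp_all
  then have "(\<Sum>t\<in>T. c t * Re (g k t * cnj (g l t))) = 0" for k l
    by (intro sum.neutral) blast
  then show "weighted_gram T c g = 0"
    unfolding weighted_gram_def vec_eq_iff by simp
qed

lemma psd_le_if_diff_weighted_gram:
  assumes "B - A = weighted_gram T c g" "\<And>t. t \<in> T \<Longrightarrow> c t \<ge> 0"
  shows "psd_le A B"
  unfolding psd_le_def assms(1) quadratic_form_weighted_gram using assms(2)
  by (auto intro!: sum_nonneg)

lemma eq_iff_diff_weighted_gram:
  assumes "B - A = weighted_gram T c g" "finite T" "\<And>t. t \<in> T \<Longrightarrow> c t \<ge> 0"
  shows "A = B \<longleftrightarrow> (\<forall>m. \<forall>t\<in>T. c t > 0 \<longrightarrow> g m t = 0)"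
proof -
  have "A = B \<longleftrightarrow> weighted_gram T c g = 0"
    by (auto simp flip: assms(1))
  with weighted_gram_eq_0_iff[OF assms(2,3)] show ?thesis
    by simp
qed

lemma sum_Collect_pairs:
  fixes f :: "'a::finite \<Rightarrow> 'a \<Rightarrow> 'b::comm_monoid_add"
  shows "(\<Sum>(i,j)\<in>{(i,j). R i j}. f i j) = (\<Sum>i\<in>UNIV. \<Sum>j\<in>UNIV. if R i j then f i j else 0)"
proof -
  have "{(i,j). R i j} = {x \<in> UNIV. case x of (i,j) \<Rightarrow> R i j}"
    by auto
  then have "(\<Sum>(i,j)\<in>{(i,j). R i j}. f i j)
      = (\<Sum>x\<in>UNIV. if (case x of (i,j) \<Rightarrow> R i j) then (case x of (i,j) \<Rightarrow> f i j) else 0)"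
    by (simp only: sum.inter_filter[OF finite])
  also have "\<dots> = (\<Sum>x\<in>UNIV \<times> UNIV. case x of (i,j) \<Rightarrow> if R i j then f i j else 0)"
    by (rule sum.cong) (auto split: prod.split)
  finally show ?thesis
    by (simp only: sum.cartesian_product)
qed

lemma sum_less_pairs_symmetric:
  fixes a :: "'a::{finite,linorder} \<Rightarrow> real" and G :: "'a \<Rightarrow> 'a \<Rightarrow> real"
  assumes "\<And>i j. G j i = G i j"
  shows "(\<Sum>i\<in>UNIV. \<Sum>j\<in>UNIV. if i < j then (a i + a j) * G i j else 0)
       = (\<Sum>i\<in>UNIV. \<Sum>j\<in>UNIV. if i \<noteq> j then a j * G i j else 0)"
proof -
  have split: "(\<Sum>i\<in>UNIV. \<Sum>j\<in>UNIV. if i \<noteq> j then a j * G i j else 0)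
     = (\<Sum>i\<in>UNIV. \<Sum>j\<in>UNIV. if i < j then a j * G i j else 0)
     + (\<Sum>i\<in>UNIV. \<Sum>j\<in>UNIV. if j < i then a j * G i j else 0)"
    unfolding sum.distrib[symmetric] by (intro sum.cong refl) (auto simp: linorder_neq_iff)
  have swap: "(\<Sum>i\<in>UNIV. \<Sum>j\<in>UNIV. if j < i then a j * G i j else 0)
     = (\<Sum>i\<in>UNIV. \<Sum>j\<in>UNIV. if i < j then a i * G i j else 0)"
    by (subst sum.swap) (use assms in \<open>intro sum.cong refl, metis\<close>)
  show ?thesis
    unfolding split swap sum.distrib[symmetric] by (intro sum.cong refl) (auto simp: algebra_simps)
qed

locale spectral_family =
  fixes T :: "(real^'p) set" and \<theta> :: "real^'p"
    and p :: "'d::{finite,linorder} \<Rightarrow> real^'p \<Rightarrow> real"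
    and w :: "'d \<Rightarrow> real^'p \<Rightarrow> complex^'d::{finite,linorder}"
  assumes open_T: "open T" and theta_in_T: "\<theta> \<in> T"
    and p_nonneg: "\<And>s k. s \<in> T \<Longrightarrow> p k s \<ge> 0"
    and p_differentiable: "\<And>k. p k differentiable (at \<theta>)"
    and w_differentiable: "\<And>k. w k differentiable (at \<theta>)"
    and w_orthonormal: "\<And>s i j. s \<in> T \<Longrightarrow> braket (w i s) (w j s) = (if i = j then 1 else 0)"
begin

abbreviation P where "P i \<equiv> p i \<theta>"
abbreviation dP where "dP m i \<equiv> pd (p i) \<theta> m"
abbreviation W where "W i \<equiv> w i \<theta>"
abbreviation dW where "dW m i \<equiv> pd (w i) \<theta> m"
\<comment> \<open>A constant rather than an abbreviation, so that rewriting with its skew-symmetry terminates.\<close>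
definition \<beta> where "\<beta> m i j = braket (W i) (dW m j)"
abbreviation \<rho> where "\<rho> \<equiv> rho p w \<theta>"
abbreviation d\<rho> where "d\<rho> m \<equiv> pd (rho p w) \<theta> m"
abbreviation L where "L m \<equiv> SLD p w \<theta> m"
abbreviation coords where "coords \<equiv> in_basis W"

lemma P_nonneg: "P i \<ge> 0"
  using p_nonneg theta_in_T .

lemma W_orthonormal: "orthonormal_family W"
  by (simp add: orthonormal_family_def w_orthonormal theta_in_T)

lemma braket_W: "braket (W i) (W j) = (if i = j then 1 else 0)"
  using W_orthonormal by (simp add: orthonormal_family_def)

lemma braket_dW: "braket (dW m i) (W j) = - \<beta> m i j"
  unfolding \<beta>_def by (rule braket_pd_skew_if_constant[OF open_T theta_in_T w_differentiable w_differentiable])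
    (rule w_orthonormal)

lemma braket_W_dW: "braket (W j) (dW m i) = - cnj (\<beta> m i j)"
  by (metis braket_dW cnj_braket complex_cnj_minus)

lemma \<beta>_skew: "\<beta> m j i = - cnj (\<beta> m i j)"
  unfolding \<beta>_def[where i=j and j=i] by (rule braket_W_dW)

lemma dP_eq_0: "P i = 0 \<Longrightarrow> dP m i = 0"
  by (rule pd_eq_0_at_zero_of_nonneg[OF open_T theta_in_T]) (simp_all add: p_nonneg p_differentiable)

lemmas coords_linear = linear_braket_matrix_vector_mult[of "W i" "W j" for i j]

lemma coords_rho: "coords \<rho> $ i $ j = (if i = j then of_real (P i) else 0)"
proof -
  have "coords \<rho> $ i $ j = (\<Sum>k\<in>UNIV. P k *\<^sub>R (braket (W i) (W k) * braket (W k) (W j)))"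
    by (simp add: in_basis_entry rho_def linear_sum[OF coords_linear]
        linear_scale[OF coords_linear] braket_outer_mult)
  also have "\<dots> = (\<Sum>k\<in>UNIV. if k = i then (if i = j then of_real (P i) else 0) else 0)"
    by (rule sum.cong) (auto simp: braket_W scaleR_conv_of_real)
  finally show ?thesis
    by simp
qed

lemma coords_d\<rho>:
  "coords (d\<rho> m) $ i $ j = (if i = j then of_real (dP m i) else 0) + of_real (P j - P i) * \<beta> m i j"
proof -
  have "coords (d\<rho> m) $ i $ j = (\<Sum>k\<in>UNIV. dP m k *\<^sub>R (braket (W i) (W k) * braket (W k) (W j))
      + P k *\<^sub>R (braket (W i) (W k) * braket (dW m k) (W j) + braket (W i) (dW m k) * braket (W k) (W j)))"
    by (simp add: in_basis_entry pd_rho[OF p_differentiable w_differentiable]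
        linear_sum[OF coords_linear] linear_scale[OF coords_linear] linear_add[OF coords_linear]
        braket_outer_mult)
  also have "\<dots> = (\<Sum>k\<in>UNIV. (if k = i then (if i = j then of_real (dP m i) else 0) else 0)
      + (if k = i then - of_real (P i) * \<beta> m i j else 0) + (if k = j then of_real (P j) * \<beta> m i j else 0))"
    by (rule sum.cong) (auto simp: braket_W braket_dW scaleR_conv_of_real simp flip: \<beta>_def)
  finally show ?thesis
    by (simp add: sum.distrib algebra_simps)
qed

lemma cnj_coords_d\<rho>: "cnj (coords (d\<rho> m) $ j $ i) = coords (d\<rho> m) $ i $ j"
  unfolding coords_d\<rho> \<beta>_skew[where m=m and i=i and j=j] by (simp add: algebra_simps)

lemma coords_sym_product:
  "coords ((1/2::real) *\<^sub>R (\<rho> ** X + X ** \<rho>)) $ i $ j = of_real ((P i + P j) / 2) * coords X $ i $ j"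
proof -
  have "coords ((1/2::real) *\<^sub>R (\<rho> ** X + X ** \<rho>)) $ i $ j
      = (1/2::real) *\<^sub>R (coords (\<rho> ** X) $ i $ j + coords (X ** \<rho>) $ i $ j)"
    unfolding in_basis_entry by (simp add: linear_scale[OF coords_linear] linear_add[OF coords_linear])
  also have "\<dots> = (1/2::real) *\<^sub>R (of_real (P i) * coords X $ i $ j + coords X $ i $ j * of_real (P j))"
    unfolding in_basis_mult[OF W_orthonormal]
    by (simp add: matrix_matrix_mult_def coords_rho if_distrib[of "\<lambda>x. x * _"]
        if_distrib[of "\<lambda>x. _ * x"] cong: if_cong)
  finally show ?thesis
    by (simp add: scaleR_conv_of_real algebra_simps)
qed

lemma SLD_exists: "\<exists>X. hermitian X \<and> d\<rho> m = (1/2::real) *\<^sub>R (\<rho> ** X + X ** \<rho>)"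
proof -
  define Y where "Y = (\<chi> i j. 2 * coords (d\<rho> m) $ i $ j / of_real (P i + P j))"
  define X where "X = basis_matrix W ** Y ** adj (basis_matrix W)"
  have "adj Y = Y"
    by (simp add: Y_def adj_def vec_eq_iff cnj_coords_d\<rho> add.commute)
  then have "hermitian X"
    unfolding X_def by (intro hermitian_conjugate) (simp add: hermitian_def)
  moreover have "coords ((1/2::real) *\<^sub>R (\<rho> ** X + X ** \<rho>)) $ i $ j = coords (d\<rho> m) $ i $ j" for i j
  proof (cases "P i + P j = 0")
    case True
    then have "P i = 0" "P j = 0"
      using P_nonneg[of i] P_nonneg[of j] by linarith+
    then show ?thesis
      by (simp add: coords_sym_product coords_d\<rho> dP_eq_0)
  next
    case False
    then have "complex_of_real (P i + P j) \<noteq> 0"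
      by (metis of_real_eq_0_iff)
    then show ?thesis
      by (simp add: coords_sym_product X_def in_basis_from_basis[OF W_orthonormal] Y_def)
  qed
  ultimately show ?thesis
    by (metis in_basis_inject[OF W_orthonormal] vec_eq_iff)
qed

lemma SLD_eq: "d\<rho> m = (1/2::real) *\<^sub>R (\<rho> ** L m + L m ** \<rho>)"
  using someI_ex[OF SLD_exists] unfolding SLD_def by blast

lemma coords_SLD:
  assumes "P i + P j > 0"
  shows "coords (L m) $ i $ j = 2 * coords (d\<rho> m) $ i $ j / of_real (P i + P j)"
proof -
  have "coords (d\<rho> m) $ i $ j = of_real ((P i + P j) / 2) * coords (L m) $ i $ j"
    by (subst SLD_eq) (rule coords_sym_product)
  moreover have "complex_of_real (P i + P j) \<noteq> 0"
    using assms by (simp only: of_real_eq_0_iff)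
  ultimately show ?thesis
    by (simp add: field_simps)
qed

lemma coords_SLD_diag: "P i > 0 \<Longrightarrow> coords (L m) $ i $ i = of_real (dP m i / P i)"
  using coords_SLD[where i=i and j=i and m=m] by (simp add: coords_d\<rho> field_simps)

lemma coords_SLD_offdiag:
  "i \<noteq> j \<Longrightarrow> P i + P j > 0 \<Longrightarrow> coords (L m) $ i $ j = of_real (2 * (P j - P i) / (P i + P j)) * \<beta> m i j"
  using coords_SLD[where i=i and j=j and m=m] by (simp add: coords_d\<rho>)

lemma H_info_entry:
  "H_info p w \<theta> $ k $ l = (\<Sum>i\<in>UNIV. \<Sum>j\<in>UNIV. Re (coords (L k) $ i $ j * of_real (P j) * coords (L l) $ j $ i))"
proof -
  have "H_info p w \<theta> $ k $ l = Re (mtrace (coords (L k ** \<rho> ** L l)))"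
    by (simp add: H_info_def mtrace_in_basis[OF W_orthonormal])
  then show ?thesis
    unfolding in_basis_mult[OF W_orthonormal]
    by (simp add: mtrace_def matrix_matrix_mult_def coords_rho if_distrib[of "\<lambda>x. _ * x"]
        cong: if_cong)
qed

lemma H_info_summand:
  "Re (coords (L k) $ i $ j * of_real (P j) * coords (L l) $ j $ i)
   = (if i = j \<and> P i > 0 then dP k i * dP l i / P i else 0)
   + (if i \<noteq> j then 4 * P j * ((P j - P i) / (P i + P j))\<^sup>2 * Re (\<beta> k i j * cnj (\<beta> l i j)) else 0)"
proof (cases "P j = 0")
  case True
  \<comment> \<open>SLD entries with p_i = p_j = 0 are arbitrary, but they only occur multiplied by p_j = 0.\<close>
  then show ?thesis
    by auto
next
  case False
  then have "P j > 0" "P i + P j > 0"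
    using P_nonneg[of i] P_nonneg[of j] by linarith+
  show ?thesis
  proof (cases "i = j")
    case True
    have "coords (L k) $ j $ j * of_real (P j) * coords (L l) $ j $ j
        = of_real (dP k j / P j * P j * (dP l j / P j))"
      by (simp only: coords_SLD_diag[OF \<open>P j > 0\<close>] of_real_mult)
    also have "dP k j / P j * P j * (dP l j / P j) = dP k j * dP l j / P j"
      using \<open>P j > 0\<close> by (simp add: field_simps)
    finally show ?thesis
      using True \<open>P j > 0\<close> by simp
  next
    case False
    define a where "a = 2 * (P j - P i) / (P i + P j)"
    have "2 * (P i - P j) / (P j + P i) = - a"
      unfolding a_def by (simp add: add.commute minus_divide_left)
    then have "coords (L l) $ j $ i = of_real a * cnj (\<beta> l i j)"
      using coords_SLD_offdiag[where i=j and j=i and m=l] False \<open>P i + P j > 0\<close>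
      by (simp add: \<beta>_skew[where m=l and i=i and j=j])
    moreover have "coords (L k) $ i $ j = of_real a * \<beta> k i j"
      using coords_SLD_offdiag[where i=i and j=j and m=k] False \<open>P i + P j > 0\<close>
      by (simp add: a_def)
    ultimately have "coords (L k) $ i $ j * of_real (P j) * coords (L l) $ j $ i
        = (a * a * P j) *\<^sub>R (\<beta> k i j * cnj (\<beta> l i j))"
      by (simp only: scaleR_conv_of_real of_real_mult ac_simps)
    moreover have "a * a * P j = 4 * P j * ((P j - P i) / (P i + P j))\<^sup>2"
      by (simp add: a_def power2_eq_square algebra_simps)
    ultimately show ?thesis
      using False by simp
  qed
qed

lemma H_info_formula:
  "H_info p w \<theta> $ k $ l = (\<Sum>i\<in>{i. P i > 0}. dP k i * dP l i / P i)
    + (\<Sum>i\<in>UNIV. \<Sum>j\<in>UNIV. if i \<noteq> j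
         then 4 * P j * ((P j - P i) / (P i + P j))\<^sup>2 * Re (\<beta> k i j * cnj (\<beta> l i j)) else 0)"
proof -
  have "(\<Sum>i\<in>UNIV. \<Sum>j\<in>UNIV. if i = j \<and> P i > 0 then dP k i * dP l i / P i else 0)
      = (\<Sum>i\<in>UNIV. if P i > 0 then dP k i * dP l i / P i else 0)"
    by (intro sum.cong refl) (auto simp: if_distrib cong: if_cong)
  also have "\<dots> = (\<Sum>i\<in>{i. P i > 0}. dP k i * dP l i / P i)"
    by (simp add: sum.If_cases)
  finally show ?thesis
    unfolding H_info_entry H_info_summand sum.distrib by simp
qed

lemma CL_info_formula:
  "CL_info p w \<theta> $ k $ l = (\<Sum>i\<in>{i. P i > 0}. dP k i * dP l i / P i)
    + (\<Sum>i\<in>UNIV. \<Sum>j\<in>UNIV. if i \<noteq> j then 4 * P j * Re (\<beta> k i j * cnj (\<beta> l i j)) else 0)"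
proof -
  have symmetric: "Re (\<beta> k j i * cnj (\<beta> l j i)) = Re (\<beta> k i j * cnj (\<beta> l i j))" for i j
    by (simp add: \<beta>_skew[where i=i and j=j] algebra_simps)
  have "Re (\<Sum>(i,j)\<in>{(i,j). i < j}. of_real (P i + P j) * braket (dW k i) (W j) * braket (W j) (dW l i))
      = (\<Sum>i\<in>UNIV. \<Sum>j\<in>UNIV. if i < j then (P i + P j) * Re (\<beta> k i j * cnj (\<beta> l i j)) else 0)"
    unfolding sum_Collect_pairs
    by (simp add: braket_dW braket_W_dW if_distrib[of Re] algebra_simps cong: if_cong)
  also have "\<dots> = (\<Sum>i\<in>UNIV. \<Sum>j\<in>UNIV. if i \<noteq> j then P j * Re (\<beta> k i j * cnj (\<beta> l i j)) else 0)"
    by (rule sum_less_pairs_symmetric) (rule symmetric)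
  finally have "CL_info p w \<theta> $ k $ l = (\<Sum>i\<in>{i. P i > 0}. 1 / P i * dP k i * dP l i)
    + 4 * (\<Sum>i\<in>UNIV. \<Sum>j\<in>UNIV. if i \<noteq> j then P j * Re (\<beta> k i j * cnj (\<beta> l i j)) else 0)"
    by (simp only: CL_info_def vec_lambda_beta)
  then show ?thesis
    by (simp add: sum_distrib_left if_distrib[of "\<lambda>x. 4 * x"] mult.assoc cong: if_cong)
qed

lemma CL_minus_H_info:
  "CL_info p w \<theta> - H_info p w \<theta>
   = weighted_gram UNIV (\<lambda>(i,j). if i \<noteq> j then 16 * P i * (P j)\<^sup>2 / (P i + P j)\<^sup>2 else 0)
       (\<lambda>m (i,j). \<beta> m i j)"
proof -
  have weight: "4 * P j - 4 * P j * ((P j - P i) / (P i + P j))\<^sup>2 = 16 * P i * (P j)\<^sup>2 / (P i + P j)\<^sup>2"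
    for i j
  proof (cases "P i + P j = 0")
    case True
    then have "P i = 0" "P j = 0"
      using P_nonneg[of i] P_nonneg[of j] by linarith+
    then show ?thesis
      by simp
  next
    case False
    then have "(P i + P j)\<^sup>2 \<noteq> 0"
      by simp
    then show ?thesis
      by (simp add: field_simps power2_eq_square)
  qed
  have "(CL_info p w \<theta> - H_info p w \<theta>) $ k $ l = (\<Sum>i\<in>UNIV. \<Sum>j\<in>UNIV. if i \<noteq> j
      then (4 * P j - 4 * P j * ((P j - P i) / (P i + P j))\<^sup>2) * Re (\<beta> k i j * cnj (\<beta> l i j))
      else 0)" for k l
    by (simp add: CL_info_formula H_info_formula flip: sum_subtractf)
      (intro sum.cong refl, simp add: algebra_simps)
  then show ?thesis
    unfolding weight
    by (simp add: vec_eq_iff weighted_gram_def sum.cartesian_product[of _ UNIV UNIV, unfolded UNIV_Times_UNIV]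
        case_prod_beta if_distrib[of "\<lambda>x. x * _"] cong: if_cong)
qed

lemma CU_minus_CL_info:
  "CU_info p w \<theta> - CL_info p w \<theta> = weighted_gram UNIV (\<lambda>i. 4 * P i) (\<lambda>m i. \<beta> m i i)"
proof -
  have "(CU_info p w \<theta> - CL_info p w \<theta>) $ k $ l
      = 4 * Re (\<Sum>i\<in>{i. P i > 0}. of_real (P i) * braket (dW k i) (W i) * braket (W i) (dW l i))" for k l
    by (simp add: CU_info_def)
  also have "\<dots> k l = (\<Sum>i\<in>{i. P i > 0}. 4 * P i * Re (\<beta> k i i * cnj (\<beta> l i i)))" for k l
    by (simp add: braket_dW braket_W_dW sum_distrib_left algebra_simps)
  also have "\<dots> k l = (\<Sum>i\<in>UNIV. 4 * P i * Re (\<beta> k i i * cnj (\<beta> l i i)))" for k l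
    using P_nonneg by (intro sum.mono_neutral_left) (auto simp: order.order_iff_strict)
  finally show ?thesis
    by (simp add: vec_eq_iff weighted_gram_def)
qed

lemma psd_le_H_CL_info: "psd_le (H_info p w \<theta>) (CL_info p w \<theta>)"
  by (rule psd_le_if_diff_weighted_gram[OF CL_minus_H_info]) (auto simp: P_nonneg)

lemma psd_le_CL_CU_info: "psd_le (CL_info p w \<theta>) (CU_info p w \<theta>)"
  by (rule psd_le_if_diff_weighted_gram[OF CU_minus_CL_info]) (simp add: P_nonneg)

lemma H_eq_CL_info_iff:
  "H_info p w \<theta> = CL_info p w \<theta> \<longleftrightarrow> (\<forall>m j k. j \<noteq> k \<and> P j > 0 \<and> P k > 0 \<longrightarrow> braket (dW m j) (W k) = 0)"
proof -
  have "16 * P j * (P k)\<^sup>2 / (P j + P k)\<^sup>2 > 0 \<longleftrightarrow> P j > 0 \<and> P k > 0" for j k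
    using P_nonneg[of j] P_nonneg[of k] by (auto simp: zero_less_divide_iff zero_less_mult_iff)
  then show ?thesis
    by (subst eq_iff_diff_weighted_gram[OF CL_minus_H_info finite]) (auto simp: braket_dW P_nonneg)
qed

lemma CL_eq_CU_info_iff:
  "CL_info p w \<theta> = CU_info p w \<theta> \<longleftrightarrow> (\<forall>m i. P i > 0 \<longrightarrow> braket (dW m i) (W i) = 0)"
  by (subst eq_iff_diff_weighted_gram[OF CU_minus_CL_info finite]) (auto simp: braket_dW P_nonneg)

end

theorem theorem3p3:
  fixes \<Theta> :: "(real^'p) set"
    and p :: "'d::{finite,linorder} \<Rightarrow> real^'p \<Rightarrow> real"
    and w :: "'d::{finite,linorder} \<Rightarrow> real^'p \<Rightarrow> complex^'d::{finite,linorder}"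
  assumes "open \<Theta>"
    and "\<forall>\<theta>\<in>\<Theta>. \<forall>k. p k \<theta> \<ge> 0"
    and "\<forall>\<theta>\<in>\<Theta>. (\<Sum>k\<in>UNIV. p k \<theta>) = 1"
    and "\<forall>\<theta>\<in>\<Theta>. \<forall>k. p k differentiable (at \<theta>)"
    and "\<forall>\<theta>\<in>\<Theta>. \<forall>k. w k differentiable (at \<theta>)"
    and "\<forall>\<theta>\<in>\<Theta>. \<forall>i j. braket (w i \<theta>) (w j \<theta>) = (if i = j then 1 else 0)"
  shows "\<forall>\<theta>\<in>\<Theta>.
      psd_le (H_info p w \<theta>) (CL_info p w \<theta>) \<and>
      psd_le (CL_info p w \<theta>) (CU_info p w \<theta>) \<and>
      (H_info p w \<theta> = CL_info p w \<theta> \<longleftrightarrow>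
         (\<forall>m j k. j \<noteq> k \<and> p j \<theta> > 0 \<and> p k \<theta> > 0 \<longrightarrow>
            braket (pd (w j) \<theta> m) (w k \<theta>) = 0)) \<and>
      (CL_info p w \<theta> = CU_info p w \<theta> \<longleftrightarrow>
         (\<forall>m i. p i \<theta> > 0 \<longrightarrow> braket (pd (w i) \<theta> m) (w i \<theta>) = 0))"
proof
  fix \<theta> assume "\<theta> \<in> \<Theta>"
  then interpret spectral_family \<Theta> \<theta> p w
    using assms by unfold_locales auto
  show "psd_le (H_info p w \<theta>) (CL_info p w \<theta>) \<and>
      psd_le (CL_info p w \<theta>) (CU_info p w \<theta>) \<and>
      (H_info p w \<theta> = CL_info p w \<theta> \<longleftrightarrow>
         (\<forall>m j k. j \<noteq> k \<and> p j \<theta> > 0 \<and> p k \<theta> > 0 \<longrightarrow>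
            braket (pd (w j) \<theta> m) (w k \<theta>) = 0)) \<and>
      (CL_info p w \<theta> = CU_info p w \<theta> \<longleftrightarrow>
         (\<forall>m i. p i \<theta> > 0 \<longrightarrow> braket (pd (w i) \<theta> m) (w i \<theta>) = 0))"
    using psd_le_H_CL_info psd_le_CL_CU_info H_eq_CL_info_iff CL_eq_CU_info_iff by blast
qed

end
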